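(* Let $k\ge1$ and consider the Poisson mixture on $\{0,1,2,\dots\}$ $$f(x\mid\lambda,\boldsymbol\gamma,\mathbf p)=\frac{1}{x!}\sum_{i=1}^k p_i\,\lambda_i^x e^{-\lambda_i},\qquad \lambda_i=\frac{\lambda\gamma_i}{p_i},$$ where $\lambda>0$, $\mathbf p=(p_1,\dots,p_k)$ with $p_i>0$, $\sum_i p_i=1$, and $\boldsymbol\gamma=(\gamma_1,\dots,\gamma_k)$ with $\gamma_i>0$, $\sum_i\gamma_i=1$ (so that $\lambda=\sum_i p_i\lambda_i$ is the mean of the mixture). Put the prior $\lambda^{-1}\,\mathrm d\lambda\times\pi_0(\mathrm d(\boldsymbol\gamma,\mathbf p))$ where $\pi_0$ is any proper probability distribution not depending on $\lambda$. Then for any sample $x_1,\dots,x_n\in\{0,1,2,\dots\}$ containing at least one strictly positive observation, the posterior distribution is proper, i.e. $0<\int\prod_{j=1}^n f(x_j\mid\lambda,\boldsymbol\gamma,\mathbf p)\,\lambda^{-1}\mathrm d\lambda\,\pi_0(\mathrm d(\boldsymbol\gamma,\mathbf p))<\infty$.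
   Context: A posterior is proper when likelihood times prior has finite positive total integral over the parameter space. *)

theory Defs
  imports "HOL-Probability.Probability"
begin

definition pois_mix :: "nat \<Rightarrow> real \<Rightarrow> real^'k::finite \<Rightarrow> real^'k \<Rightarrow> real" where
  "pois_mix x l g p =
     (1 / fact x) * (\<Sum>i\<in>UNIV. p$i * (l * g$i / p$i) ^ x * exp (- (l * g$i / p$i)))"

definition open_simplex :: "(real^'k::finite) set" where
  "open_simplex = {v. (\<forall>i. v$i > 0) \<and> (\<Sum>i\<in>UNIV. v$i) = 1}"

end

theory Submission
  imports Defs
begin

text \<open>Divided by \<open>\<lambda>\<close>, the \<open>i\<close>-th Poisson term \<open>p_i \<lambda>_i^x exp(-\<lambda>_i) / x!\<close> is \<open>p_i / x\<close>
  times an Erlang density in \<open>\<lambda>\<close> of shape \<open>x\<close> and rate \<open>\<gamma>_i / p_i\<close>. Hence for \<open>x > 0\<close> the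
  integral of \<open>f(x | \<lambda>, \<gamma>, p) / \<lambda>\<close> over \<open>\<lambda> > 0\<close> is exactly \<open>1 / x\<close>, whatever \<open>\<gamma>\<close> and \<open>p\<close> are.
  Every factor of the likelihood lies in \<open>[0, 1]\<close>, so its \<open>\<lambda>\<close>-integral is at most \<open>1 / x\<close>
  for a positive observation \<open>x\<close>, and integrating this bound against the probability \<open>\<pi>\<^sub>0\<close>
  gives finiteness.\<close>

lemma prod_le_factor:
  fixes f :: "'a \<Rightarrow> 'b::linordered_semidom"
  assumes "finite A" "a \<in> A" "\<And>x. x \<in> A \<Longrightarrow> 0 \<le> f x" "\<And>x. x \<in> A \<Longrightarrow> f x \<le> 1"
  shows "prod f A \<le> f a"
proof -
  have "prod f A = f a * prod f (A - {a})"
    using assms(1,2) by (rule prod.remove)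
  also have "\<dots> \<le> f a * 1"
    using assms by (intro mult_left_mono prod_le_1) auto
  finally show ?thesis by simp
qed

lemma nn_integral_pos_if_AE_pos:
  assumes "f \<in> borel_measurable M" "A \<in> sets M" "emeasure M A \<noteq> 0"
    and "AE x in M. x \<in> A \<longrightarrow> 0 < f x"
  shows "0 < integral\<^sup>N M f"
proof (rule ccontr)
  assume "\<not> 0 < integral\<^sup>N M f"
  then have "AE x in M. f x = 0"
    using nn_integral_0_iff_AE[OF assms(1)] by (simp add: zero_less_iff_neq_zero)
  with assms(4) have "AE x in M. x \<notin> A"
    by eventually_elim auto
  then have "emeasure M A = 0"
    using assms(2) AE_iff_null_sets by blast
  with assms(3) show False ..
qed

lemma borel_measurable_vec_nth[measurable]: "(\<lambda>v::real^'n::finite. v $ i) \<in> borel_measurable borel"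
  by (intro borel_measurable_continuous_onI continuous_intros)

lemma open_simplexD:
  assumes "v \<in> open_simplex"
  shows "0 < v $ i" "(\<Sum>i\<in>UNIV. v $ i) = 1"
  using assms by (auto simp: open_simplex_def)

lemma pois_mix_eq_sum_poisson_pmf:
  assumes "0 < l" "g \<in> open_simplex" "p \<in> open_simplex"
  shows "pois_mix x l g p = (\<Sum>i\<in>UNIV. p$i * pmf (poisson_pmf (l * (g$i / p$i))) x)"
  using assms open_simplexD[OF assms(2)] open_simplexD[OF assms(3)]
  by (simp add: pois_mix_def sum_distrib_left field_simps)

lemma pois_mix_pos:
  assumes "0 < l" "g \<in> open_simplex" "p \<in> open_simplex"
  shows "0 < pois_mix x l g p"
  unfolding pois_mix_eq_sum_poisson_pmf[OF assms]
  using assms open_simplexD[OF assms(2)] open_simplexD[OF assms(3)]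
  by (intro sum_pos mult_pos_pos) (auto simp: pmf_positive)

lemma pois_mix_le_1:
  assumes "0 < l" "g \<in> open_simplex" "p \<in> open_simplex"
  shows "pois_mix x l g p \<le> 1"
proof -
  have "pois_mix x l g p \<le> (\<Sum>i\<in>UNIV. p$i * 1)"
    unfolding pois_mix_eq_sum_poisson_pmf[OF assms]
    using open_simplexD[OF assms(3)] by (intro sum_mono mult_left_mono pmf_le_1) (auto intro: less_imp_le)
  then show ?thesis
    using open_simplexD(2)[OF assms(3)] by simp
qed

lemma poisson_pmf_div_eq_erlang_density:
  assumes "0 < c" "0 < l" "0 < x"
  shows "pmf (poisson_pmf (l * c)) x / l = erlang_density (x - 1) c l / x"
proof -
  obtain k where "x = Suc k" using assms(3) by (cases x) auto
  then show ?thesis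
    using assms by (simp add: erlang_density_def power_mult_distrib field_simps del: fact_Suc) (simp add: algebra_simps)
qed

lemma pois_mix_div_eq_sum_erlang_density:
  assumes "0 < x" "0 < l" "g \<in> open_simplex" "p \<in> open_simplex"
  shows "pois_mix x l g p / l = (\<Sum>i\<in>UNIV. p$i / x * erlang_density (x - 1) (g$i / p$i) l)"
  unfolding pois_mix_eq_sum_poisson_pmf[OF assms(2-4)] sum_divide_distrib
proof (intro sum.cong refl)
  fix i
  have "p$i * pmf (poisson_pmf (l * (g$i / p$i))) x / l = p$i * (pmf (poisson_pmf (l * (g$i / p$i))) x / l)"
    by simp
  also have "\<dots> = p$i * (erlang_density (x - 1) (g$i / p$i) l / x)"
    using open_simplexD(1)[OF assms(3)] open_simplexD(1)[OF assms(4)] assms(1,2)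
    by (subst poisson_pmf_div_eq_erlang_density) auto
  finally show "p$i * pmf (poisson_pmf (l * (g$i / p$i))) x / l = p$i / x * erlang_density (x - 1) (g$i / p$i) l"
    by simp
qed

lemma nn_integral_pois_mix_div_mean:
  assumes "0 < x" "g \<in> open_simplex" "p \<in> open_simplex"
  shows "(\<integral>\<^sup>+l. indicator {0<..} l * ennreal (pois_mix x l g p / l) \<partial>lborel) = ennreal (1 / real x)"
proof -
  define c where "c i = g$i / p$i" for i
  have c_pos: "0 < c i" and p_pos: "0 < p$i" for i
    using open_simplexD(1)[OF assms(2)] open_simplexD(1)[OF assms(3)] by (simp_all add: c_def)
  have "AE l in lborel. indicator {0<..} l * ennreal (pois_mix x l g p / l)
          = (\<Sum>i\<in>UNIV. ennreal (p$i / x) * ennreal (erlang_density (x - 1) (c i) l))"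
    \<comment> \<open>only almost everywhere: for \<open>x = 1\<close> the Erlang density is nonzero at \<open>l = 0\<close>\<close>
    using AE_lborel_singleton[of 0]
  proof eventually_elim
    case (elim l)
    show ?case
    proof (cases "0 < l")
      case True
      have "indicator {0<..} l * ennreal (pois_mix x l g p / l)
          = ennreal (\<Sum>i\<in>UNIV. p$i / x * erlang_density (x - 1) (c i) l)"
        using True by (simp add: pois_mix_div_eq_sum_erlang_density[OF assms(1) True assms(2,3)] c_def)
      also have "\<dots> = (\<Sum>i\<in>UNIV. ennreal (p$i / x * erlang_density (x - 1) (c i) l))"
        using c_pos p_pos by (intro sum_ennreal[symmetric] mult_nonneg_nonneg) (simp_all add: less_imp_le)
      also have "\<dots> = (\<Sum>i\<in>UNIV. ennreal (p$i / x) * ennreal (erlang_density (x - 1) (c i) l))"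
        using p_pos by (intro sum.cong refl ennreal_mult') (simp add: less_imp_le)
      finally show ?thesis .
    qed (use elim in \<open>simp add: erlang_density_def\<close>)
  qed
  then have "(\<integral>\<^sup>+l. indicator {0<..} l * ennreal (pois_mix x l g p / l) \<partial>lborel)
      = (\<Sum>i\<in>UNIV. ennreal (p$i / x) * (\<integral>\<^sup>+l. ennreal (erlang_density (x - 1) (c i) l) \<partial>lborel))"
    by (simp add: nn_integral_cong_AE nn_integral_sum nn_integral_cmult)
  also have "\<dots> = (\<Sum>i\<in>UNIV. ennreal (p$i / x))"
    using nn_integral_erlang_ith_moment[OF c_pos, where i = 0] by simp
  also have "\<dots> = ennreal (1 / real x)"
    using p_pos open_simplexD(2)[OF assms(3)]
    by (simp add: sum_ennreal less_imp_le sum_divide_distrib[symmetric])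
  finally show ?thesis .
qed

lemma nn_integral_pois_mix_likelihood_le:
  assumes "x \<in> set xs" "0 < x" "g \<in> open_simplex" "p \<in> open_simplex"
  shows "(\<integral>\<^sup>+l. indicator {0<..} l * ennreal ((\<Prod>j<length xs. pois_mix (xs ! j) l g p) / l) \<partial>lborel)
    \<le> ennreal (1 / real x)"
proof -
  obtain j0 where j0: "j0 < length xs" "xs ! j0 = x"
    using assms(1) by (auto simp: in_set_conv_nth)
  have "(\<integral>\<^sup>+l. indicator {0<..} l * ennreal ((\<Prod>j<length xs. pois_mix (xs ! j) l g p) / l) \<partial>lborel)
      \<le> (\<integral>\<^sup>+l. indicator {0<..} l * ennreal (pois_mix x l g p / l) \<partial>lborel)"
  proof (intro nn_integral_mono)
    fix l :: real
    show "indicator {0<..} l * ennreal ((\<Prod>j<length xs. pois_mix (xs ! j) l g p) / l)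
        \<le> indicator {0<..} l * ennreal (pois_mix x l g p / l)"
    proof (cases "0 < l")
      case True
      have "(\<Prod>j<length xs. pois_mix (xs ! j) l g p) \<le> pois_mix (xs ! j0) l g p"
        using j0 True assms(3,4)
        by (intro prod_le_factor less_imp_le[OF pois_mix_pos] pois_mix_le_1) auto
      with True j0(2) show ?thesis
        by (simp add: divide_right_mono ennreal_leI)
    qed simp
  qed
  also have "\<dots> = ennreal (1 / real x)"
    using assms(2-4) by (rule nn_integral_pois_mix_div_mean)
  finally show ?thesis .
qed

lemma nn_integral_pois_mix_likelihood_pos:
  assumes "g \<in> open_simplex" "p \<in> open_simplex"
  shows "0 < (\<integral>\<^sup>+l. indicator {0<..} l * ennreal ((\<Prod>j<length xs. pois_mix (xs ! j) l g p) / l) \<partial>lborel)"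
proof (rule nn_integral_pos_if_AE_pos[where A = "{0<..1}"])
  show "(\<lambda>l. indicator {0<..} l * ennreal ((\<Prod>j<length xs. pois_mix (xs ! j) l g p) / l))
      \<in> borel_measurable lborel"
    unfolding pois_mix_def by measurable
  show "AE l in lborel. l \<in> {0<..1} \<longrightarrow>
      0 < indicator {0<..} l * ennreal ((\<Prod>j<length xs. pois_mix (xs ! j) l g p) / l)"
    using assms by (intro AE_I2 impI) (simp add: prod_pos pois_mix_pos)
qed simp_all

lemma (in prob_space) nn_integral_pair_pos_finite:
  fixes f :: "'b \<times> 'a \<Rightarrow> ennreal"
  assumes "sigma_finite_measure N" "f \<in> borel_measurable (N \<Otimes>\<^sub>M M)" "C < \<infinity>"
    and "AE y in M. 0 < (\<integral>\<^sup>+x. f (x, y) \<partial>N) \<and> (\<integral>\<^sup>+x. f (x, y) \<partial>N) \<le> C"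
  shows "0 < integral\<^sup>N (N \<Otimes>\<^sub>M M) f \<and> integral\<^sup>N (N \<Otimes>\<^sub>M M) f < \<infinity>"
proof -
  interpret N: sigma_finite_measure N by fact
  interpret pair_sigma_finite N M ..
  have Tonelli: "integral\<^sup>N (N \<Otimes>\<^sub>M M) f = (\<integral>\<^sup>+y. (\<integral>\<^sup>+x. f (x, y) \<partial>N) \<partial>M)"
    using assms(2) by (rule nn_integral_snd[symmetric])
  have "(\<lambda>(y, x). f (x, y)) \<in> borel_measurable (M \<Otimes>\<^sub>M N)"
    using assms(2) by (rule measurable_pair_swap)
  then have measurable: "(\<lambda>y. \<integral>\<^sup>+x. f (x, y) \<partial>N) \<in> borel_measurable M"
    by (rule N.borel_measurable_nn_integral_fst[where f = "\<lambda>(y, x). f (x, y)", simplified])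
  have "(\<integral>\<^sup>+y. (\<integral>\<^sup>+x. f (x, y) \<partial>N) \<partial>M) \<le> (\<integral>\<^sup>+y. C \<partial>M)"
    using assms(4) by (intro nn_integral_mono_AE) auto
  also have "\<dots> < \<infinity>"
    using assms(3) by (simp add: emeasure_space_1)
  finally have "integral\<^sup>N (N \<Otimes>\<^sub>M M) f < \<infinity>"
    unfolding Tonelli .
  moreover have "0 < integral\<^sup>N (N \<Otimes>\<^sub>M M) f"
    unfolding Tonelli using measurable assms(4)
    by (intro nn_integral_pos_if_AE_pos[where A = "space M"]) (auto simp: emeasure_space_1)
  ultimately show ?thesis
    by simp
qed

theorem theorem2:
  fixes \<pi>0 :: "((real^'k::finite) \<times> (real^'k)) measure"
    and xs :: "nat list"
  assumes "prob_space \<pi>0"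
    and "sets \<pi>0 = sets borel"
    and "AE gp in \<pi>0. fst gp \<in> open_simplex \<and> snd gp \<in> open_simplex"
    and "\<exists>x\<in>set xs. x > 0"
  shows "0 < (\<integral>\<^sup>+ (l, gp). indicator {0<..} l *
                 ennreal ((\<Prod>j<length xs. pois_mix (xs ! j) l (fst gp) (snd gp)) / l)
               \<partial>(lborel \<Otimes>\<^sub>M \<pi>0))
      \<and> (\<integral>\<^sup>+ (l, gp). indicator {0<..} l *
                 ennreal ((\<Prod>j<length xs. pois_mix (xs ! j) l (fst gp) (snd gp)) / l)
               \<partial>(lborel \<Otimes>\<^sub>M \<pi>0)) < \<infinity>"
proof -
  interpret \<pi>0: prob_space \<pi>0 by fact
  obtain x where x: "x \<in> set xs" "0 < x"
    using assms(4) by blast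
  have "sets \<pi>0 = sets (borel \<Otimes>\<^sub>M borel)"
    unfolding assms(2) borel_prod ..
  then have "(\<lambda>(l, gp). indicator {0<..} l *
      ennreal ((\<Prod>j<length xs. pois_mix (xs ! j) l (fst gp) (snd gp)) / l))
    \<in> borel_measurable (lborel \<Otimes>\<^sub>M \<pi>0)"
    unfolding pois_mix_def
    by (subst measurable_cong_sets[OF sets_pair_measure_cong[OF refl] refl]) measurable
  then show ?thesis
    by (rule \<pi>0.nn_integral_pair_pos_finite[OF lborel.sigma_finite_measure_axioms, where C = "ennreal (1 / real x)"])
       (simp_all add: eventually_mono[OF assms(3)] nn_integral_pois_mix_likelihood_pos
          nn_integral_pois_mix_likelihood_le[OF x])
qed
end
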